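(* For every $n\ge1$ there is a bijection $A\mapsto M$ from the set of admissible sets in $\{1,3,\dots,2n+1\}$ onto the set of Motzkin paths of length $n$ such that the weight of $A$, namely $\big(\prod_{i=1}^{2n}[a(i)]_q\big)t^{(|A|-1)/2}$, equals the weight $\rho(M)$ (product of step weights) of $M$, where an up step at height $h\ge0$ has weight $[h+1]_q[h+2]_q\,t$, a level step at height $h\ge0$ has weight $[h+1]_q^2$, and a down step at height $h\ge1$ has weight $[h+1]_q[h]_q$.
   Context: $[k]_q=1+q+\cdots+q^{k-1}$. An admissible set in $\{1,3,\dots,2n+1\}$ is a set $A$ of odd numbers in $\{1,3,\dots,2n+1\}$, each colored white or black, such that: (i) $A$ has $k$ white and $k+1$ black elements for some $k\ge0$, and $2n+1$ is black; (ii) for each $i\in[2n]$, $A\cap\{1,\dots,i\}$ has at least as many white as black elements. Its vector is $a(i)=f(i)-g(i)+1$ ($1\le i\le 2n$), where $f(i)$ (resp. $g(i)$) is the number of white (resp. black) elements of $A$ less than $i$. A Motzkin path of length $n$ is a lattice path from $(0,0)$ to $(n,0)$ staying weakly above the $x$-axis with steps up $(1,1)$, down $(1,-1)$, level $(1,0)$; the height of a step is the $y$-coordinate of its starting point. *)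

theory Defs
  imports Main
begin

definition qint :: "'a::comm_ring_1 \<Rightarrow> nat \<Rightarrow> 'a" where
  "qint q k = (\<Sum>j<k. q ^ j)"

text \<open>A colored set of odd numbers is represented as a pair (W, B) of its white
  elements W and black elements B.\<close>
definition admissible :: "nat \<Rightarrow> (nat set \<times> nat set) set" where
  "admissible n = {(W, B).
     W \<inter> B = {} \<and>
     W \<union> B \<subseteq> {m. odd m \<and> 1 \<le> m \<and> m \<le> 2*n+1} \<and>
     card B = card W + 1 \<and>
     2*n+1 \<in> B \<and>
     (\<forall>i\<in>{1..2*n}. card (B \<inter> {1..i}) \<le> card (W \<inter> {1..i}))}"

definition avec :: "nat set \<times> nat set \<Rightarrow> nat \<Rightarrow> int" where
  "avec A i = int (card {w \<in> fst A. w < i}) - int (card {b \<in> snd A. b < i}) + 1"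

definition adm_weight :: "nat \<Rightarrow> 'a::comm_ring_1 \<Rightarrow> 'a \<Rightarrow> nat set \<times> nat set \<Rightarrow> 'a" where
  "adm_weight n q t A =
     (\<Prod>i=1..2*n. qint q (nat (avec A i))) * t ^ ((card (fst A) + card (snd A) - 1) div 2)"

datatype step = Up | Level | Down

fun motzkin_from :: "nat \<Rightarrow> step list \<Rightarrow> bool" where
  "motzkin_from h [] = (h = 0)"
| "motzkin_from h (Up # s) = motzkin_from (Suc h) s"
| "motzkin_from h (Level # s) = motzkin_from h s"
| "motzkin_from 0 (Down # s) = False"
| "motzkin_from (Suc h) (Down # s) = motzkin_from h s"

definition motzkin_paths :: "nat \<Rightarrow> step list set" where
  "motzkin_paths n = {s. length s = n \<and> motzkin_from 0 s}"

fun rho_from :: "'a::comm_ring_1 \<Rightarrow> 'a \<Rightarrow> nat \<Rightarrow> step list \<Rightarrow> 'a" where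
  "rho_from q t h [] = 1"
| "rho_from q t h (Up # s) = qint q (h+1) * qint q (h+2) * t * rho_from q t (h+1) s"
| "rho_from q t h (Level # s) = qint q (h+1) ^ 2 * rho_from q t h s"
| "rho_from q t h (Down # s) = qint q (h+1) * qint q h * rho_from q t (h-1) s"

definition rho :: "'a::comm_ring_1 \<Rightarrow> 'a \<Rightarrow> step list \<Rightarrow> 'a" where
  "rho q t M = rho_from q t 0 M"

end

theory Submission imports Defs begin

text \<open>Read the odd numbers 1, 3, ..., 2n-1 in order and let the number 2j+1 become
  step j+1 of a path: an up step if it is white, a down step if it is black, a level step
  if it is absent (the black number 2n+1 is forgotten). Then f(i) - g(i) is the height h(i div 2)
  of the path after i div 2 steps, so the ballot condition of an admissible set is exactly the
  condition that the path stays weakly above the axis, and the balance of colours makes it end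
  on the axis. Moreover
  \<Prod>i=1..2n [a(i)] = [h 0 + 1][h 1 + 1]^2 ... [h (n-1) + 1]^2[h n + 1]
  = \<Prod>j<n [h j + 1][h (j+1) + 1],
  and the j-th factor is precisely the weight of the j-th step; the up steps, counted by
  t, are the white elements, whose number is (|A|-1)/2.\<close>

fun step_delta :: "step \<Rightarrow> int" where
  "step_delta Up = 1"
| "step_delta Level = 0"
| "step_delta Down = -1"

definition height :: "step list \<Rightarrow> nat \<Rightarrow> int" where
  "height s k = (\<Sum>j<k. step_delta (s ! j))"

lemma height_0 [simp]: "height s 0 = 0"
  by (simp add: height_def)

lemma height_Cons_Suc [simp]: "height (x # s) (Suc k) = step_delta x + height s k"
  unfolding height_def by (simp only: sum.lessThan_Suc_shift) simp

lemma height_Suc: "height s (Suc k) = height s k + step_delta (s ! k)"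
  by (simp add: height_def)

lemma all_le_Suc_iff: "(\<forall>k\<le>Suc m. P k) \<longleftrightarrow> P 0 \<and> (\<forall>k\<le>m. P (Suc k))"
  by (metis Suc_le_mono le0 not0_implies_Suc)

lemma motzkin_from_iff_height:
  "motzkin_from h s \<longleftrightarrow>
     (\<forall>k\<le>length s. 0 \<le> int h + height s k) \<and> int h + height s (length s) = 0"
proof (induction s arbitrary: h)
  case Nil
  show ?case by simp
next
  case (Cons x s)
  show ?case
  proof (cases x)
    case Up
    then show ?thesis using Cons.IH[of "Suc h"] by (simp add: all_le_Suc_iff algebra_simps)
  next
    case Level
    then show ?thesis using Cons.IH[of h] by (simp add: all_le_Suc_iff)
  next
    case Down
    show ?thesis
    proof (cases h)
      case 0
      then show ?thesis using Down by (auto simp: all_le_Suc_iff)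
    next
      case (Suc h')
      then show ?thesis using Down Cons.IH[of h'] by (simp add: all_le_Suc_iff algebra_simps)
    qed
  qed
qed

text \<open>No positivity hypothesis is needed: a down step from height 0 contributes the
  factor [0] = 0 on both sides.\<close>

lemma rho_from_eq_prod_height:
  "rho_from q t h s =
     (\<Prod>j<length s. qint q (nat (int h + height s j + 1)) * qint q (nat (int h + height s (Suc j) + 1)))
     * t ^ length (filter ((=) Up) s)"
proof (induction s arbitrary: h)
  case Nil
  show ?case by simp
next
  case (Cons x s)
  have split_first: "(\<Prod>j<length (x # s). F j) = F 0 * (\<Prod>j<length s. F (Suc j))" for F :: "nat \<Rightarrow> 'a"
    by (simp only: length_Cons prod.lessThan_Suc_shift)
  show ?case
  proof (cases x)
    case Up
    then show ?thesis
      by (subst split_first) (simp add: Cons.IH algebra_simps nat_add_distrib)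
  next
    case Level
    then show ?thesis
      by (subst split_first) (simp add: Cons.IH algebra_simps power2_eq_square nat_add_distrib)
  next
    case Down
    then show ?thesis
    proof (cases h)
      case 0
      then show ?thesis using Down by (subst split_first) (simp add: qint_def)
    next
      case (Suc h')
      then show ?thesis using Down
        by (subst split_first) (simp add: Cons.IH algebra_simps nat_add_distrib)
    qed
  qed
qed

lemma prod_atLeastAtMost_div_2:
  "(\<Prod>i=1..2*n. F (i div 2)) = (\<Prod>j<n. F j * F (Suc j))"
  by (induction n) (auto simp: prod.cl_ivl_Suc mult_ac)

definition odd_count :: "nat set \<Rightarrow> nat \<Rightarrow> nat" where
  "odd_count X k = card {j. j < k \<and> 2*j+1 \<in> X}"

lemma odd_count_0 [simp]: "odd_count X 0 = 0"
  by (simp add: odd_count_def)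

lemma odd_count_Suc: "odd_count X (Suc k) = odd_count X k + (if 2*k+1 \<in> X then 1 else 0)"
proof -
  have "{j. j < Suc k \<and> 2*j+1 \<in> X} =
        (if 2*k+1 \<in> X then insert k {j. j < k \<and> 2*j+1 \<in> X} else {j. j < k \<and> 2*j+1 \<in> X})"
    by (auto simp: less_Suc_eq)
  then show ?thesis by (simp add: odd_count_def)
qed

lemma card_less_eq_odd_count:
  assumes "\<forall>x\<in>X. odd x"
  shows "card {x\<in>X. x < i} = odd_count X (i div 2)"
proof -
  have "{x\<in>X. x < i} = (\<lambda>j. 2*j+1) ` {j. j < i div 2 \<and> 2*j+1 \<in> X}"
  proof (intro set_eqI iffI)
    fix x assume "x \<in> {x\<in>X. x < i}"
    then have x: "x \<in> X" "x < i" by auto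
    obtain j where j: "x = 2*j+1" using assms x(1) by (metis oddE)
    have "j < i div 2" using x(2) j by presburger
    then show "x \<in> (\<lambda>j. 2*j+1) ` {j. j < i div 2 \<and> 2*j+1 \<in> X}" using x j by auto
  next
    fix x assume "x \<in> (\<lambda>j. 2*j+1) ` {j. j < i div 2 \<and> 2*j+1 \<in> X}"
    then obtain j where j: "x = 2*j+1" "j < i div 2" "2*j+1 \<in> X" by auto
    have "x < i" using j(1,2) by presburger
    then show "x \<in> {x\<in>X. x < i}" using j by auto
  qed
  then show ?thesis unfolding odd_count_def by (simp add: card_image inj_on_def)
qed

lemma card_Int_atLeastAtMost_eq_odd_count:
  assumes "\<forall>x\<in>X. odd x"
  shows "card (X \<inter> {1..i}) = odd_count X (Suc i div 2)"
proof -
  have "0 \<notin> X" using assms by auto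
  then have "X \<inter> {1..i} = {x\<in>X. x < Suc i}" by (auto simp: Suc_le_eq less_Suc_eq_le intro: gr0I)
  then show ?thesis using card_less_eq_odd_count[OF assms] by simp
qed

definition colored_odd :: "nat \<Rightarrow> nat set \<Rightarrow> nat set \<Rightarrow> bool" where
  "colored_odd n W B \<longleftrightarrow>
     W \<inter> B = {} \<and> W \<union> B \<subseteq> {m. odd m \<and> 1 \<le> m \<and> m \<le> 2*n+1} \<and> 2*n+1 \<in> B"

lemma admissible_iff_colored_odd:
  "(W, B) \<in> admissible n \<longleftrightarrow> colored_odd n W B \<and> card B = card W + 1 \<and>
     (\<forall>i\<in>{1..2*n}. card (B \<inter> {1..i}) \<le> card (W \<inter> {1..i}))"
  by (auto simp: admissible_def colored_odd_def)

lemma colored_odd_card: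
  assumes "colored_odd n W B"
  shows "card W = odd_count W n" and "card B = odd_count B n + 1"
proof -
  have odd: "\<forall>x\<in>W. odd x" "\<forall>x\<in>B. odd x" and bounded: "W \<union> B \<subseteq> {1..2*n+1}"
    using assms by (auto simp: colored_odd_def)
  have "W = W \<inter> {1..2*n+1}" "B = B \<inter> {1..2*n+1}" using bounded by auto
  then have "card W = odd_count W (Suc n)" "card B = odd_count B (Suc n)"
    using card_Int_atLeastAtMost_eq_odd_count[OF odd(1), of "2*n+1"]
      card_Int_atLeastAtMost_eq_odd_count[OF odd(2), of "2*n+1"] by simp_all
  then show "card W = odd_count W n" "card B = odd_count B n + 1"
    using assms by (auto simp: colored_odd_def odd_count_Suc)
qed

definition step_at :: "nat set \<times> nat set \<Rightarrow> nat \<Rightarrow> step" where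
  "step_at A j = (if 2*j+1 \<in> fst A then Up else if 2*j+1 \<in> snd A then Down else Level)"

definition path_of :: "nat \<Rightarrow> nat set \<times> nat set \<Rightarrow> step list" where
  "path_of n A = map (step_at A) [0..<n]"

definition colored_set_of :: "nat \<Rightarrow> step list \<Rightarrow> nat set \<times> nat set" where
  "colored_set_of n s =
     ((\<lambda>j. 2*j+1) ` {j. j < n \<and> s ! j = Up},
      insert (2*n+1) ((\<lambda>j. 2*j+1) ` {j. j < n \<and> s ! j = Down}))"

lemma length_path_of [simp]: "length (path_of n A) = n"
  by (simp add: path_of_def)

lemma nth_path_of [simp]: "j < n \<Longrightarrow> path_of n A ! j = step_at A j"
  by (simp add: path_of_def)

lemma height_path_of:
  assumes "colored_odd n W B" and "k \<le> n"
  shows "height (path_of n (W, B)) k = int (odd_count W k) - int (odd_count B k)"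
  using assms(2)
proof (induction k)
  case 0
  show ?case by simp
next
  case (Suc k)
  have "2*k+1 \<in> W \<Longrightarrow> 2*k+1 \<notin> B" using assms(1) unfolding colored_odd_def by blast
  then show ?case using Suc by (auto simp: height_Suc odd_count_Suc step_at_def)
qed

lemma ballot_iff_odd_count:
  assumes "colored_odd n W B"
  shows "(\<forall>i\<in>{1..2*n}. card (B \<inter> {1..i}) \<le> card (W \<inter> {1..i})) \<longleftrightarrow>
         (\<forall>k\<le>n. odd_count B k \<le> odd_count W k)"
proof -
  have odd: "\<forall>x\<in>W. odd x" "\<forall>x\<in>B. odd x" using assms by (auto simp: colored_odd_def)
  have "(\<forall>i\<in>{1..2*n}. card (B \<inter> {1..i}) \<le> card (W \<inter> {1..i})) \<longleftrightarrow>
        (\<forall>i\<in>{1..2*n}. odd_count B (Suc i div 2) \<le> odd_count W (Suc i div 2))"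
    by (simp only: card_Int_atLeastAtMost_eq_odd_count[OF odd(1)]
                   card_Int_atLeastAtMost_eq_odd_count[OF odd(2)])
  also have "\<dots> \<longleftrightarrow> (\<forall>k\<le>n. odd_count B k \<le> odd_count W k)"
  proof
    assume le: "\<forall>i\<in>{1..2*n}. odd_count B (Suc i div 2) \<le> odd_count W (Suc i div 2)"
    show "\<forall>k\<le>n. odd_count B k \<le> odd_count W k"
    proof (intro allI impI)
      fix k assume "k \<le> n"
      then show "odd_count B k \<le> odd_count W k"
        using le[rule_format, of "2*k"] by (cases "k = 0") auto
    qed
  next
    assume "\<forall>k\<le>n. odd_count B k \<le> odd_count W k"
    moreover have "Suc i div 2 \<le> n" if "i \<in> {1..2*n}" for i using that by auto
    ultimately show "\<forall>i\<in>{1..2*n}. odd_count B (Suc i div 2) \<le> odd_count W (Suc i div 2)"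
      by blast
  qed
  finally show ?thesis .
qed

lemma admissible_iff_motzkin_from:
  assumes "colored_odd n W B"
  shows "(W, B) \<in> admissible n \<longleftrightarrow> motzkin_from 0 (path_of n (W, B))"
proof -
  have "(W, B) \<in> admissible n \<longleftrightarrow>
        odd_count B n = odd_count W n \<and> (\<forall>k\<le>n. odd_count B k \<le> odd_count W k)"
    using assms colored_odd_card[OF assms] ballot_iff_odd_count[OF assms]
    by (simp add: admissible_iff_colored_odd)
  also have "\<dots> \<longleftrightarrow> (\<forall>k\<le>n. 0 \<le> height (path_of n (W, B)) k) \<and> height (path_of n (W, B)) n = 0"
    using height_path_of[OF assms] by auto
  also have "\<dots> \<longleftrightarrow> motzkin_from 0 (path_of n (W, B))"
    by (simp add: motzkin_from_iff_height)
  finally show ?thesis .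
qed

lemma colored_odd_colored_set_of:
  "colored_odd n (fst (colored_set_of n s)) (snd (colored_set_of n s))"
  unfolding colored_odd_def colored_set_of_def by auto

lemma path_of_colored_set_of:
  assumes "length s = n"
  shows "path_of n (colored_set_of n s) = s"
proof (rule nth_equalityI)
  fix j assume "j < length (path_of n (colored_set_of n s))"
  then show "path_of n (colored_set_of n s) ! j = s ! j"
    using assms by (cases "s ! j") (auto simp: step_at_def colored_set_of_def)
qed (simp add: assms)

lemma colored_set_of_path_of:
  assumes "colored_odd n W B"
  shows "colored_set_of n (path_of n (W, B)) = (W, B)"
proof -
  have below: "x = 2*n+1 \<or> (\<exists>j<n. x = 2*j+1)" if "x \<in> W \<union> B" for x
  proof -
    have "odd x" "x \<le> 2*n+1" using that assms unfolding colored_odd_def by blast+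
    then obtain j where "x = 2*j+1" "j \<le> n" by (auto elim: oddE)
    then show ?thesis by (auto simp: le_less)
  qed
  have "(\<lambda>j. 2*j+1) ` {j. j < n \<and> path_of n (W, B) ! j = Up} = W"
  proof (intro set_eqI iffI)
    fix x assume "x \<in> (\<lambda>j. 2*j+1) ` {j. j < n \<and> path_of n (W, B) ! j = Up}"
    then show "x \<in> W" by (auto simp: step_at_def split: if_splits)
  next
    fix x assume x: "x \<in> W"
    moreover have "x \<noteq> 2*n+1" using x assms unfolding colored_odd_def by blast
    ultimately obtain j where "j < n" "x = 2*j+1" using below by blast
    then show "x \<in> (\<lambda>j. 2*j+1) ` {j. j < n \<and> path_of n (W, B) ! j = Up}"
      using x by (auto simp: step_at_def)
  qed
  moreover have "insert (2*n+1) ((\<lambda>j. 2*j+1) ` {j. j < n \<and> path_of n (W, B) ! j = Down}) = B"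
  proof (intro set_eqI iffI)
    fix x assume "x \<in> insert (2*n+1) ((\<lambda>j. 2*j+1) ` {j. j < n \<and> path_of n (W, B) ! j = Down})"
    then show "x \<in> B" using assms by (auto simp: step_at_def colored_odd_def split: if_splits)
  next
    fix x assume x: "x \<in> B"
    have "x \<notin> W" using x assms unfolding colored_odd_def by blast
    show "x \<in> insert (2*n+1) ((\<lambda>j. 2*j+1) ` {j. j < n \<and> path_of n (W, B) ! j = Down})"
    proof (cases "x = 2*n+1")
      case False
      then obtain j where "j < n" "x = 2*j+1" using below x by blast
      then show ?thesis using x \<open>x \<notin> W\<close> by (auto simp: step_at_def)
    qed simp
  qed
  ultimately show ?thesis by (simp add: colored_set_of_def)
qed

lemma bij_betw_path_of: "bij_betw (path_of n) (admissible n) (motzkin_paths n)"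
proof (rule bij_betw_byWitness[where f' = "colored_set_of n"])
  show "\<forall>A\<in>admissible n. colored_set_of n (path_of n A) = A"
    by (auto simp: admissible_iff_colored_odd colored_set_of_path_of)
  show "\<forall>s\<in>motzkin_paths n. path_of n (colored_set_of n s) = s"
    by (auto simp: motzkin_paths_def path_of_colored_set_of)
  show "path_of n ` admissible n \<subseteq> motzkin_paths n"
  proof
    fix s assume "s \<in> path_of n ` admissible n"
    then obtain W B where A: "(W, B) \<in> admissible n" and s: "s = path_of n (W, B)" by auto
    then have "colored_odd n W B" by (simp add: admissible_iff_colored_odd)
    then show "s \<in> motzkin_paths n"
      using A s admissible_iff_motzkin_from by (simp add: motzkin_paths_def)
  qed
  show "colored_set_of n ` motzkin_paths n \<subseteq> admissible n"
  proof
    fix A assume "A \<in> colored_set_of n ` motzkin_paths n"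
    then obtain s where s: "s \<in> motzkin_paths n" and A: "A = colored_set_of n s" by auto
    have "colored_odd n (fst A) (snd A)" using A colored_odd_colored_set_of by simp
    moreover have "path_of n A = s" using s A path_of_colored_set_of by (auto simp: motzkin_paths_def)
    ultimately show "A \<in> admissible n"
      using admissible_iff_motzkin_from[of n "fst A" "snd A"] s by (simp add: motzkin_paths_def)
  qed
qed

lemma avec_eq_height_path_of:
  assumes "colored_odd n W B" and "i div 2 \<le> n"
  shows "avec (W, B) i = height (path_of n (W, B)) (i div 2) + 1"
proof -
  have "\<forall>x\<in>W. odd x" "\<forall>x\<in>B. odd x" using assms(1) by (auto simp: colored_odd_def)
  then show ?thesis
    using height_path_of[OF assms] by (simp add: avec_def card_less_eq_odd_count)
qed

lemma count_Up_path_of: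
  assumes "colored_odd n W B"
  shows "length (filter ((=) Up) (path_of n (W, B))) = card W"
proof -
  have "length (filter ((=) Up) (path_of n (W, B))) = card {j. j < n \<and> Up = path_of n (W, B) ! j}"
    by (simp add: length_filter_conv_card)
  also have "{j. j < n \<and> Up = path_of n (W, B) ! j} = {j. j < n \<and> 2*j+1 \<in> W}"
    by (auto simp: step_at_def split: if_splits)
  finally show ?thesis using colored_odd_card(1)[OF assms] by (simp add: odd_count_def)
qed

lemma adm_weight_eq_rho_path_of:
  assumes "A \<in> admissible n"
  shows "adm_weight n q t A = rho q t (path_of n A)"
proof -
  obtain W B where A: "A = (W, B)" by fastforce
  have colored: "colored_odd n W B" and card_B: "card B = card W + 1"
    using assms by (auto simp: A admissible_iff_colored_odd)
  let ?h = "height (path_of n (W, B))"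
  have "(\<Prod>i=1..2*n. qint q (nat (avec (W, B) i))) = (\<Prod>i=1..2*n. qint q (nat (?h (i div 2) + 1)))"
    using avec_eq_height_path_of[OF colored] by (intro prod.cong) auto
  also have "\<dots> = (\<Prod>j<n. qint q (nat (?h j + 1)) * qint q (nat (?h (Suc j) + 1)))"
    by (rule prod_atLeastAtMost_div_2)
  finally show ?thesis
    unfolding adm_weight_def rho_def A
    using rho_from_eq_prod_height[of q t 0] count_Up_path_of[OF colored] card_B by simp
qed

theorem mainTheorem8:
  fixes n :: nat
  assumes "n \<ge> 1"
  shows "\<exists>f. bij_betw f (admissible n) (motzkin_paths n) \<and>
           (\<forall>(q::'a::comm_ring_1) t. \<forall>A\<in>admissible n. adm_weight n q t A = rho q t (f A))"
  using bij_betw_path_of adm_weight_eq_rho_path_of by blast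

end
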